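(* For all positive integers $N$, there exists an $N\times N$ real matrix $Q$ with first row $q_1$ satisfying $\|q_1\|_\infty=1$ and $\log_2(\gamma_2(Q))=\Theta(N)$, such that, for any online factorization algorithm for $Q$ in the row arrival model, there exists a time step $t$ for which the factorization value achieved by the algorithm by step $t$ (that is, $\max_{s\le t}\|\ell_s\|_2$) is at least $\sqrt{\frac12\log_2(\gamma_2(Q))}\cdot\gamma_2(Q_t)$, where $Q_t$ is the matrix of the first $t$ rows of $Q$.
   Context: For a matrix, $\|R\|_{1\to2}$ is the maximum $\ell_2$ norm of a column, $\|L\|_{2\to\infty}$ the maximum $\ell_2$ norm of a row, and $\gamma_2(A)=\min\{\|L\|_{2\to\infty}\|R\|_{1\to2}:LR=A\}$. Row arrival model: rows $q_1,q_2,\ldots\in\mathbb{R}^N$ arrive one at a time. The algorithm chooses an initial (possibly empty) matrix $R_0$ with $N$ columns; at step $t$, after receiving $q_t$, it forms $R_t$ by appending rows to $R_{t-1}$ and outputs a row vector $\ell_t$ with $\ell_tR_t=q_t$, where $\|R_t\|_{1\to2}\le1$ at every step. *)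

theory Defs
  imports Complex_Main
begin

text \<open>Matrices are represented as functions nat => nat => real together with
explicit dimensions (only the entries with indices below the dimensions matter);
vectors as functions nat => real with an explicit length.\<close>

definition l2norm :: "nat \<Rightarrow> (nat \<Rightarrow> real) \<Rightarrow> real" where
  "l2norm n v = sqrt (\<Sum>j<n. (v j)\<^sup>2)"

definition inf_norm :: "nat \<Rightarrow> (nat \<Rightarrow> real) \<Rightarrow> real" where
  "inf_norm n v = Max (insert 0 ((\<lambda>j. \<bar>v j\<bar>) ` {..<n}))"

definition norm_2_inf :: "nat \<Rightarrow> nat \<Rightarrow> (nat \<Rightarrow> nat \<Rightarrow> real) \<Rightarrow> real" where
  "norm_2_inf m k L = Max (insert 0 ((\<lambda>i. sqrt (\<Sum>p<k. (L i p)\<^sup>2)) ` {..<m}))"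

definition norm_1_2 :: "nat \<Rightarrow> nat \<Rightarrow> (nat \<Rightarrow> nat \<Rightarrow> real) \<Rightarrow> real" where
  "norm_1_2 k n R = Max (insert 0 ((\<lambda>j. sqrt (\<Sum>p<k. (R p j)\<^sup>2)) ` {..<n}))"

definition gamma2 :: "nat \<Rightarrow> nat \<Rightarrow> (nat \<Rightarrow> nat \<Rightarrow> real) \<Rightarrow> real" where
  "gamma2 m n A = Inf {norm_2_inf m k L * norm_1_2 k n R | k L R.
      \<forall>i<m. \<forall>j<n. (\<Sum>p<k. L i p * R p j) = A i j}"

text \<open>An execution of an online factorization algorithm in the row arrival model
on the N x N matrix Q (rows q_t = Q (t-1), t = 1..N):
r t is the number of rows of R_t, R t is R_t, l t is the output row vector ell_t.\<close>
definition online_run :: "nat \<Rightarrow> (nat \<Rightarrow> nat \<Rightarrow> real) \<Rightarrow> (nat \<Rightarrow> nat) \<Rightarrow>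
    (nat \<Rightarrow> nat \<Rightarrow> nat \<Rightarrow> real) \<Rightarrow> (nat \<Rightarrow> nat \<Rightarrow> real) \<Rightarrow> bool" where
  "online_run N Q r R l \<longleftrightarrow>
     (\<forall>t\<le>N. norm_1_2 (r t) N (R t) \<le> 1) \<and>
     (\<forall>t\<in>{1..N}. r (t - 1) \<le> r t \<and>
        (\<forall>i<r (t - 1). \<forall>j<N. R t i j = R (t - 1) i j) \<and>
        (\<forall>j<N. (\<Sum>p<r t. l t p * R t p j) = Q (t - 1) j))"

end

theory Submission
  imports Defs "HOL-Analysis.L2_Norm"
begin

text \<open>Let \<open>n = 2^k \<le> N < 2 n\<close> and let row \<open>i < n\<close> of \<open>Q\<close> be \<open>2^i h\<^sub>i\<close>, where the \<open>h\<^sub>i\<close> are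
  the rows of the Sylvester-Hadamard matrix of order \<open>n\<close>; all other entries are zero.
  Factoring the first \<open>t\<close> rows through the diagonal of their weights gives
  \<open>gamma2 Q\<^sub>t \<le> 2^t / sqrt 2\<close>, and the entry \<open>2^(n-1)\<close> bounds \<open>gamma2 Q\<close> from below, so
  \<open>log 2 (gamma2 Q)\<close> lies in \<open>[n - 1, n)\<close>.

  Against an online algorithm, row \<open>i\<close> arrives at step \<open>t = i + 1\<close> and equals \<open>l\<^sub>t R\<^sub>t\<close>; as
  \<open>R\<^sub>t\<close> is the top block of the final \<open>R\<^sub>N\<close>, pairing with \<open>h\<^sub>i\<close> and Cauchy-Schwarz give
  \<open>n 2^i \<le> |l\<^sub>t| |R\<^sub>N h\<^sub>i|\<close>. By Parseval the numbers \<open>|R\<^sub>N h\<^sub>i|\<^sup>2\<close> sum to \<open>n\<close> times the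
  squared column norms of \<open>R\<^sub>N\<close>, hence to at most \<open>n\<^sup>2\<close>; so one of them is at most \<open>n\<close>, and
  for that step \<open>|l\<^sub>t| \<ge> sqrt n 2^(t-1) \<ge> sqrt (log 2 (gamma2 Q) / 2) gamma2 Q\<^sub>t\<close>.\<close>

lemma Max_insert_0_image_le:
  assumes "0 \<le> B" "\<And>i. i < m \<Longrightarrow> f i \<le> B"
  shows "Max (insert 0 (f ` {..<m::nat})) \<le> (B::real)"
  using assms by (subst Max_le_iff) (auto simp del: image_insert)

lemma Max_insert_0_image_ge:
  assumes "i < m"
  shows "f i \<le> Max (insert (0::real) (f ` {..<m::nat}))"
  using assms by (intro Max_ge) (simp_all del: image_insert)

lemma Max_insert_0_image_nonneg: "0 \<le> Max (insert (0::real) (f ` {..<m::nat}))"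
  by (intro Max_ge) (simp_all del: image_insert)

lemma abs_sum_mult_le_sqrt_sum_squares:
  fixes a b :: "'a \<Rightarrow> real"
  shows "\<bar>\<Sum>p\<in>I. a p * b p\<bar> \<le> sqrt (\<Sum>p\<in>I. (a p)\<^sup>2) * sqrt (\<Sum>p\<in>I. (b p)\<^sup>2)"
proof -
  have "\<bar>\<Sum>p\<in>I. a p * b p\<bar> \<le> (\<Sum>p\<in>I. \<bar>a p\<bar> * \<bar>b p\<bar>)"
    using sum_abs[of "\<lambda>p. a p * b p" I] by (simp add: abs_mult)
  also have "\<dots> \<le> L2_set a I * L2_set b I"
    by (rule L2_set_mult_ineq)
  finally show ?thesis
    unfolding L2_set_def .
qed

lemma sum_lessThan_double:
  "(\<Sum>i<2 * n. f i) = (\<Sum>i<n::nat. f i + f (i + n))"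
proof -
  have "(\<Sum>i<2 * n. f i) = (\<Sum>i\<in>{0..<n}. f i) + (\<Sum>i\<in>{0 + n..<n + n}. f i)"
    by (simp add: sum.atLeastLessThan_concat atLeast0LessThan[symmetric] mult_2)
  also have "\<dots> = (\<Sum>i<n. f i + f (i + n))"
    by (simp only: sum.shift_bounds_nat_ivl atLeast0LessThan sum.distrib)
  finally show ?thesis .
qed

definition factorization_costs :: "nat \<Rightarrow> nat \<Rightarrow> (nat \<Rightarrow> nat \<Rightarrow> real) \<Rightarrow> real set" where
  "factorization_costs m n A = {norm_2_inf m k L * norm_1_2 k n R | k L R.
      \<forall>i<m. \<forall>j<n. (\<Sum>p<k. L i p * R p j) = A i j}"

lemma gamma2_eq_Inf_factorization_costs: "gamma2 m n A = Inf (factorization_costs m n A)"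
  unfolding gamma2_def factorization_costs_def ..

lemma factorization_cost_mem:
  assumes "\<forall>i<m. \<forall>j<n. (\<Sum>p<k. L i p * R p j) = A i j"
  shows "norm_2_inf m k L * norm_1_2 k n R \<in> factorization_costs m n A"
  using assms unfolding factorization_costs_def by blast

lemma factorization_costs_nonempty: "factorization_costs m n A \<noteq> {}"
proof -
  define I where "I p j = (if p = j then 1 else 0 :: real)" for p j :: nat
  have "\<forall>i<m. \<forall>j<n. (\<Sum>p<n. A i p * I p j) = A i j"
    by (simp add: I_def if_distrib[of "(*) _"] cong: if_cong)
  then show ?thesis
    using factorization_cost_mem by blast
qed

lemma factorization_cost_nonneg:
  assumes "x \<in> factorization_costs m n A"
  shows "0 \<le> x"
  using assms unfolding factorization_costs_def norm_2_inf_def norm_1_2_def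
  by (auto intro!: mult_nonneg_nonneg Max_insert_0_image_nonneg)

lemma abs_entry_le_factorization_cost:
  assumes "x \<in> factorization_costs m n A" "i < m" "j < n"
  shows "\<bar>A i j\<bar> \<le> x"
proof -
  obtain k L R where x: "x = norm_2_inf m k L * norm_1_2 k n R"
    and LR: "\<forall>i<m. \<forall>j<n. (\<Sum>p<k. L i p * R p j) = A i j"
    using assms(1) unfolding factorization_costs_def by blast
  have "\<bar>A i j\<bar> = \<bar>\<Sum>p<k. L i p * R p j\<bar>"
    using LR assms by simp
  also have "\<dots> \<le> sqrt (\<Sum>p<k. (L i p)\<^sup>2) * sqrt (\<Sum>p<k. (R p j)\<^sup>2)"
    by (rule abs_sum_mult_le_sqrt_sum_squares)
  also have "\<dots> \<le> x"
    unfolding x norm_2_inf_def norm_1_2_def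
    by (intro mult_mono Max_insert_0_image_ge Max_insert_0_image_nonneg assms) (auto intro: sum_nonneg)
  finally show ?thesis .
qed

lemma gamma2_nonneg: "0 \<le> gamma2 m n A"
  unfolding gamma2_eq_Inf_factorization_costs
  by (rule cInf_greatest[OF factorization_costs_nonempty]) (rule factorization_cost_nonneg)

lemma abs_entry_le_gamma2:
  assumes "i < m" "j < n"
  shows "\<bar>A i j\<bar> \<le> gamma2 m n A"
  unfolding gamma2_eq_Inf_factorization_costs
  by (rule cInf_greatest[OF factorization_costs_nonempty])
    (rule abs_entry_le_factorization_cost[OF _ assms])

lemma gamma2_le_factorization_cost:
  assumes "\<forall>i<m. \<forall>j<n. (\<Sum>p<k. L i p * R p j) = A i j"
  shows "gamma2 m n A \<le> norm_2_inf m k L * norm_1_2 k n R"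
  unfolding gamma2_eq_Inf_factorization_costs
proof (rule cInf_lower)
  show "norm_2_inf m k L * norm_1_2 k n R \<in> factorization_costs m n A"
    using assms by (rule factorization_cost_mem)
  show "bdd_below (factorization_costs m n A)"
    using factorization_cost_nonneg by (rule bdd_belowI)
qed

lemma sqrt_mult_sqrt_divide_self:
  fixes w S :: real
  assumes "0 \<le> w" "w \<le> S"
  shows "sqrt (w * S) * sqrt (w / S) = w"
proof (cases "S = 0")
  case False
  then have "sqrt (w * S) * sqrt (w / S) = sqrt (w\<^sup>2)"
    by (simp add: power2_eq_square flip: real_sqrt_mult)
  then show ?thesis
    using assms by simp
qed (use assms in simp)

lemma sum_square_sqrt_weight_mult_le_1:
  assumes "\<forall>p<m. 0 \<le> w p" "\<forall>p<m. \<bar>b p\<bar> \<le> (1::real)"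
  shows "(\<Sum>p<m. (sqrt (w p / (\<Sum>q<m. w q)) * b p)\<^sup>2) \<le> 1"
proof -
  define S where "S = (\<Sum>q<m. w q)"
  have "0 \<le> S"
    unfolding S_def using assms by (intro sum_nonneg) auto
  have "(\<Sum>p<m. (sqrt (w p / S) * b p)\<^sup>2) \<le> (\<Sum>p<m. w p / S)"
  proof (rule sum_mono)
    fix p assume "p \<in> {..<m}"
    then have "0 \<le> w p / S" "(b p)\<^sup>2 \<le> 1"
      using assms \<open>0 \<le> S\<close> by (simp_all add: abs_square_le_1)
    then have "(sqrt (w p / S) * b p)\<^sup>2 = w p / S * (b p)\<^sup>2"
      by (simp add: power_mult_distrib)
    also have "\<dots> \<le> w p / S"
      by (rule mult_left_le) fact+
    finally show "(sqrt (w p / S) * b p)\<^sup>2 \<le> w p / S" .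
  qed
  also have "\<dots> \<le> 1"
    by (simp add: S_def flip: sum_divide_distrib)
  finally show ?thesis
    unfolding S_def .
qed

lemma gamma2_le_weighted_rows:
  assumes A: "\<forall>i<m. \<forall>j<n. A i j = w i * B i j"
    and w: "\<forall>i<m. 0 \<le> w i \<and> w i \<le> W"
    and B: "\<forall>i<m. \<forall>j<n. \<bar>B i j\<bar> \<le> 1"
  shows "gamma2 m n A \<le> sqrt (W * (\<Sum>i<m. w i))"
proof -
  define S where "S = (\<Sum>i<m. w i)"
  define L where "L i p = (if p = i then sqrt (w i * S) else 0)" for i p :: nat
  define R where "R p j = sqrt (w p / S) * B p j" for p j
  have w_le_S: "w i \<le> S" if "i < m" for i
    unfolding S_def using w that by (intro member_le_sum) auto
  have S_nonneg: "0 \<le> S"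
    unfolding S_def using w by (intro sum_nonneg) auto
  have WS_nonneg: "0 \<le> W * S"
    using w S_nonneg by (cases "m = 0") (auto simp: S_def)
  have "\<forall>i<m. \<forall>j<n. (\<Sum>p<m. L i p * R p j) = A i j"
    using A w w_le_S sqrt_mult_sqrt_divide_self
    by (simp add: L_def R_def if_distrib[of "\<lambda>x. x * _"] cong: if_cong)
  then have "gamma2 m n A \<le> norm_2_inf m m L * norm_1_2 m n R"
    by (rule gamma2_le_factorization_cost)
  also have "\<dots> \<le> sqrt (W * S) * 1"
  proof (intro mult_mono')
    show "norm_2_inf m m L \<le> sqrt (W * S)"
      unfolding norm_2_inf_def
    proof (rule Max_insert_0_image_le)
      fix i assume "i < m"
      then have "(\<Sum>p<m. (L i p)\<^sup>2) = w i * S"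
        using w S_nonneg by (simp add: L_def if_distrib[of power2] cong: if_cong)
      also have "\<dots> \<le> W * S"
        using \<open>i < m\<close> w S_nonneg by (intro mult_right_mono) auto
      finally show "sqrt (\<Sum>p<m. (L i p)\<^sup>2) \<le> sqrt (W * S)"
        by simp
    qed (rule real_sqrt_ge_zero[OF WS_nonneg])
    show "norm_1_2 m n R \<le> 1"
      unfolding norm_1_2_def R_def S_def
      using w B sum_square_sqrt_weight_mult_le_1[of m w]
      by (intro Max_insert_0_image_le) auto
  qed (simp_all add: norm_1_2_def norm_2_inf_def Max_insert_0_image_nonneg)
  finally show ?thesis
    by (simp add: S_def)
qed

lemma online_run_step:
  assumes "online_run N Q r R l" "t \<in> {1..N}"
  shows "r (t - 1) \<le> r t"
    and "\<forall>i<r (t - 1). \<forall>j<N. R t i j = R (t - 1) i j"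
    and "\<forall>j<N. (\<Sum>p<r t. l t p * R t p j) = Q (t - 1) j"
  using assms unfolding online_run_def by blast+

lemma online_run_prefix:
  assumes run: "online_run N Q r R l" and "s \<le> t" "t \<le> N"
  shows "r s \<le> r t \<and> (\<forall>i<r s. \<forall>j<N. R t i j = R s i j)"
  using \<open>s \<le> t\<close> \<open>t \<le> N\<close>
proof (induction t rule: dec_induct)
  case (step t)
  then have "Suc t \<in> {1..N}"
    by simp
  with step show ?case
    using online_run_step(1,2)[OF run, of "Suc t"] by fastforce
qed simp

lemma online_run_column_le:
  assumes "online_run N Q r R l" "t \<le> N" "j < N"
  shows "(\<Sum>p<r t. (R t p j)\<^sup>2) \<le> 1"
proof -
  have "sqrt (\<Sum>p<r t. (R t p j)\<^sup>2) \<le> norm_1_2 (r t) N (R t)"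
    unfolding norm_1_2_def using \<open>j < N\<close> by (rule Max_insert_0_image_ge)
  also have "\<dots> \<le> 1"
    using assms unfolding online_run_def by blast
  finally show ?thesis
    by simp
qed

lemma online_run_inner_le:
  assumes run: "online_run N Q r R l" and t: "t \<in> {1..N}"
  shows "(\<Sum>j<N. Q (t - 1) j * v j)
    \<le> l2norm (r t) (l t) * sqrt (\<Sum>p<r N. (\<Sum>j<N. R N p j * v j)\<^sup>2)"
proof -
  define y where "y p = (\<Sum>j<N. R t p j * v j)" for p
  have prefix: "r t \<le> r N" "\<forall>p<r t. \<forall>j<N. R N p j = R t p j"
    using online_run_prefix[OF run, of t N] t by auto
  have "(\<Sum>j<N. Q (t - 1) j * v j) = (\<Sum>j<N. (\<Sum>p<r t. l t p * R t p j) * v j)"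
    using online_run_step(3)[OF run t] by simp
  also have "\<dots> = (\<Sum>p<r t. l t p * y p)"
    unfolding y_def by (simp only: sum_distrib_right sum_distrib_left mult.assoc) (rule sum.swap)
  also have "\<dots> \<le> l2norm (r t) (l t) * sqrt (\<Sum>p<r t. (y p)\<^sup>2)"
    unfolding l2norm_def by (rule order_trans[OF abs_ge_self abs_sum_mult_le_sqrt_sum_squares])
  also have "\<dots> \<le> l2norm (r t) (l t) * sqrt (\<Sum>p<r N. (\<Sum>j<N. R N p j * v j)\<^sup>2)"
  proof -
    have "(\<Sum>p<r t. (y p)\<^sup>2) = (\<Sum>p<r t. (\<Sum>j<N. R N p j * v j)\<^sup>2)"
      unfolding y_def using prefix by (intro sum.cong) auto
    also have "\<dots> \<le> (\<Sum>p<r N. (\<Sum>j<N. R N p j * v j)\<^sup>2)"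
      using prefix by (intro sum_mono2) auto
    finally show ?thesis
      by (intro mult_left_mono) (simp_all add: l2norm_def sum_nonneg)
  qed
  finally show ?thesis .
qed

fun sylvester_hadamard :: "nat \<Rightarrow> nat \<Rightarrow> nat \<Rightarrow> real" where
  "sylvester_hadamard 0 i j = 1"
| "sylvester_hadamard (Suc k) i j =
     sylvester_hadamard k (i mod 2^k) (j mod 2^k) * (if 2^k \<le> i \<and> 2^k \<le> j then -1 else 1)"

lemma sylvester_hadamard_square [simp]: "(sylvester_hadamard k i j)\<^sup>2 = 1"
  by (induction k arbitrary: i j) (auto simp: power_mult_distrib)

lemma abs_sylvester_hadamard [simp]: "\<bar>sylvester_hadamard k i j\<bar> = 1"
  by (simp only: abs_square_eq_1[symmetric] sylvester_hadamard_square)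

lemma sylvester_hadamard_row_0 [simp]: "sylvester_hadamard k 0 j = 1"
  by (induction k arbitrary: j) auto

lemma sylvester_hadamard_Suc_blocks:
  assumes "i < 2^k"
  shows "sylvester_hadamard (Suc k) i j = sylvester_hadamard k i (j mod 2^k)"
    and "sylvester_hadamard (Suc k) (i + 2^k) j
      = sylvester_hadamard k i (j mod 2^k) * (if 2^k \<le> j then -1 else 1)"
  using assms by simp_all

lemma mod_less_double:
  assumes "j < 2 * (n::nat)"
  shows "j mod n = (if n \<le> j then j - n else j)"
  using assms by (auto simp: le_mod_geq)

lemma sylvester_hadamard_orthogonal:
  assumes "j < 2^k" "j' < 2^k"
  shows "(\<Sum>i<2^k. sylvester_hadamard k i j * sylvester_hadamard k i j')
    = (if j = j' then 2^k else 0)"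
  using assms
proof (induction k arbitrary: j j')
  case (Suc k)
  let ?n = "2^k :: nat" and ?H = "sylvester_hadamard k"
  define s where "s j = (if ?n \<le> j then -1 else 1 :: real)" for j
  have "(\<Sum>i<2^Suc k. sylvester_hadamard (Suc k) i j * sylvester_hadamard (Suc k) i j')
      = (1 + s j * s j') * (\<Sum>i<?n. ?H i (j mod ?n) * ?H i (j' mod ?n))"
    by (simp only: power_Suc sum_lessThan_double sylvester_hadamard_Suc_blocks)
      (simp add: s_def sum_distrib_left algebra_simps)
  also have "\<dots> = (1 + s j * s j') * (if j mod ?n = j' mod ?n then ?n else 0)"
    by (simp add: Suc.IH)
  also have "\<dots> = (if j = j' then 2^Suc k else 0)"
  proof -
    have "j mod ?n = (if ?n \<le> j then j - ?n else j)" "j' mod ?n = (if ?n \<le> j' then j' - ?n else j')"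
      using Suc.prems by (simp_all add: mod_less_double)
    then show ?thesis
      unfolding s_def by (auto split: if_splits)
  qed
  finally show ?case .
qed simp

lemma sylvester_hadamard_parseval:
  "(\<Sum>i<2^k. (\<Sum>j<2^k. v j * sylvester_hadamard k i j)\<^sup>2) = 2^k * (\<Sum>j<(2::nat)^k. (v j)\<^sup>2)"
proof -
  let ?n = "2^k :: nat" and ?H = "sylvester_hadamard k"
  have "(\<Sum>i<?n. (\<Sum>j<?n. v j * ?H i j)\<^sup>2)
      = (\<Sum>i<?n. \<Sum>j<?n. \<Sum>j'<?n. v j * v j' * (?H i j * ?H i j'))"
    by (simp add: power2_eq_square sum_product algebra_simps)
  also have "\<dots> = (\<Sum>j<?n. \<Sum>j'<?n. \<Sum>i<?n. v j * v j' * (?H i j * ?H i j'))"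
    by (subst sum.swap, rule sum.cong, simp, rule sum.swap)
  also have "\<dots> = (\<Sum>j<?n. \<Sum>j'<?n. v j * v j' * (if j = j' then 2^k else 0))"
    by (simp add: sylvester_hadamard_orthogonal flip: sum_distrib_left)
  also have "\<dots> = 2^k * (\<Sum>j<?n. (v j)\<^sup>2)"
    by (simp add: sum_distrib_left power2_eq_square algebra_simps if_distrib[of "(*) _"] cong: if_cong)
  finally show ?thesis .
qed

definition weighted_hadamard :: "nat \<Rightarrow> nat \<Rightarrow> nat \<Rightarrow> real" where
  "weighted_hadamard k i j = (if i < 2^k \<and> j < 2^k then 2^i * sylvester_hadamard k i j else 0)"

lemma inf_norm_weighted_hadamard_row_0:
  assumes "0 < N"
  shows "inf_norm N (weighted_hadamard k 0) = 1"
proof (rule antisym)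
  show "inf_norm N (weighted_hadamard k 0) \<le> 1"
    unfolding inf_norm_def by (rule Max_insert_0_image_le) (auto simp: weighted_hadamard_def abs_mult)
  have "\<bar>weighted_hadamard k 0 0\<bar> \<le> inf_norm N (weighted_hadamard k 0)"
    unfolding inf_norm_def using assms by (rule Max_insert_0_image_ge)
  then show "1 \<le> inf_norm N (weighted_hadamard k 0)"
    by (simp add: weighted_hadamard_def)
qed

lemma gamma2_weighted_hadamard_le:
  assumes "1 \<le> min t (2^k)"
  shows "gamma2 t n (weighted_hadamard k) \<le> 2 ^ min t (2^k) / sqrt 2"
proof -
  define m where "m = min t (2^k)"
  define w where "w i = (if i < 2^k then 2^i else 0 :: real)" for i
  have "gamma2 t n (weighted_hadamard k) \<le> sqrt (2^(m - 1) * (\<Sum>i<t. w i))"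
  proof (rule gamma2_le_weighted_rows)
    show "\<forall>i<t. \<forall>j<n. weighted_hadamard k i j
        = w i * (if j < 2^k then sylvester_hadamard k i j else 0)"
      by (simp add: weighted_hadamard_def w_def)
    show "\<forall>i<t. 0 \<le> w i \<and> w i \<le> 2^(m - 1)"
      by (auto simp: w_def m_def intro: power_increasing)
  qed simp
  also have "(\<Sum>i<t. w i) = (\<Sum>i<m. 2^i)"
  proof -
    have "{..<t} \<inter> {i. i < 2^k} = {..<m}"
      by (auto simp: m_def)
    then show ?thesis
      unfolding w_def by (simp add: sum.If_cases)
  qed
  also have "\<dots> \<le> 2^m"
    by (simp add: geometric_sum)
  also have "2^(m - 1) * 2^m = ((2::real)^m)\<^sup>2 / 2"
    using assms by (simp add: m_def power2_eq_square power_diff)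
  finally show ?thesis
    by (simp add: m_def real_sqrt_divide)
qed

lemma gamma2_weighted_hadamard_ge:
  assumes "2^k \<le> m" "0 < n"
  shows "2^(2^k - 1) \<le> gamma2 m n (weighted_hadamard k)"
proof -
  have "(0::nat) < 2^k"
    by simp
  then have "\<bar>weighted_hadamard k (2^k - 1) 0\<bar> \<le> gamma2 m n (weighted_hadamard k)"
    using assms by (intro abs_entry_le_gamma2) linarith+
  then show ?thesis
    by (simp add: weighted_hadamard_def abs_mult)
qed

lemma log_gamma2_weighted_hadamard:
  assumes "2^k \<le> N"
  shows "2^k - 1 \<le> log 2 (gamma2 N N (weighted_hadamard k))"
    and "log 2 (gamma2 N N (weighted_hadamard k)) < 2^k"
proof -
  define G where "G = gamma2 N N (weighted_hadamard k)"
  have N_pos: "0 < N"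
    using assms by (metis le_zero_eq not_gr_zero power_not_zero zero_neq_numeral)
  have lower: "2^(2^k - 1) \<le> G"
    unfolding G_def using assms N_pos by (rule gamma2_weighted_hadamard_ge)
  then have G_pos: "0 < G"
    by (rule less_le_trans[rotated]) simp
  have "G \<le> 2^(2^k) / sqrt 2"
    unfolding G_def using gamma2_weighted_hadamard_le[of N k N] assms by (simp add: min_absorb2)
  also have "\<dots> < 2^(2^k)"
    by (simp add: divide_less_eq)
  finally have "log 2 G < log 2 (2^(2^k))"
    using G_pos by (subst log_less_cancel_iff) auto
  then show "log 2 G < 2^k"
    by simp
  have "real (2^k - 1) \<le> log 2 G"
    using lower by (intro le_log_of_power) simp_all
  then show "2^k - 1 \<le> log 2 G"
    by simp
qed

lemma sylvester_hadamard_transform_le: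
  assumes "\<forall>j<2^k. (\<Sum>p<q. (R p j)\<^sup>2) \<le> 1"
  shows "(\<Sum>i<2^k. \<Sum>p<q. (\<Sum>j<2^k. R p j * sylvester_hadamard k i j)\<^sup>2) \<le> 2^k * 2^k"
proof -
  have "(\<Sum>i<2^k. \<Sum>p<q. (\<Sum>j<2^k. R p j * sylvester_hadamard k i j)\<^sup>2)
      = (\<Sum>p<q. 2^k * (\<Sum>j<(2::nat)^k. (R p j)\<^sup>2))"
    by (subst sum.swap) (simp add: sylvester_hadamard_parseval)
  also have "\<dots> = 2^k * (\<Sum>j<(2::nat)^k. \<Sum>p<q. (R p j)\<^sup>2)"
    by (simp add: sum_distrib_left sum.swap[of _ "{..<q}"])
  also have "\<dots> \<le> 2^k * (\<Sum>j<(2::nat)^k. 1)"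
    using assms by (intro mult_left_mono sum_mono) auto
  finally show ?thesis
    by simp
qed

lemma online_run_weighted_hadamard_row_norm:
  assumes N: "2^k \<le> N" and run: "online_run N (weighted_hadamard k) r R l"
  shows "\<exists>t\<in>{1..2^k}. sqrt (2^k) * 2^(t - 1) \<le> l2norm (r t) (l t)"
proof -
  let ?n = "2^k :: nat" and ?H = "sylvester_hadamard k"
  define Z where "Z i = (\<Sum>p<r N. (\<Sum>j<?n. R N p j * ?H i j)\<^sup>2)" for i
  have row: "real ?n * 2^i \<le> l2norm (r (Suc i)) (l (Suc i)) * sqrt (Z i)" if "i < ?n" for i
  proof -
    define v where "v j = (if j < ?n then ?H i j else 0)" for j
    have restrict: "{..<N} \<inter> {j. j < ?n} = {..<?n}"
      using N by auto
    have "(\<Sum>j<N. weighted_hadamard k i j * v j) = real ?n * 2^i"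
      using that by (simp add: weighted_hadamard_def v_def if_distrib[of "\<lambda>x. x * _"] sum.If_cases restrict
          mult.assoc flip: power2_eq_square cong: if_cong)
    moreover have "(\<Sum>j<N. R N p j * v j) = (\<Sum>j<?n. R N p j * ?H i j)" for p
      by (simp add: v_def if_distrib[of "(*) _"] sum.If_cases restrict cong: if_cong)
    ultimately show ?thesis
      using online_run_inner_le[OF run, of "Suc i" v] that N by (simp add: Z_def)
  qed
  have total: "(\<Sum>i<?n. Z i) \<le> real ?n * real ?n"
    unfolding Z_def using online_run_column_le[OF run, of N] N
    by (intro order_trans[OF sylvester_hadamard_transform_le]) auto
  have "\<exists>i<?n. Z i \<le> real ?n"
  proof (rule ccontr)
    assume "\<not> ?thesis"
    then have "(\<Sum>i<?n. real ?n) < (\<Sum>i<?n. Z i)"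
      by (intro sum_strict_mono) (auto simp: not_le lessThan_empty_iff)
    with total show False
      by simp
  qed
  then obtain i where i: "i < ?n" "Z i \<le> real ?n"
    by blast
  have "sqrt ?n * (sqrt ?n * 2^i) = real ?n * 2^i"
    by (simp flip: mult.assoc)
  also have "\<dots> \<le> l2norm (r (Suc i)) (l (Suc i)) * sqrt (Z i)"
    by (rule row[OF i(1)])
  also have "\<dots> \<le> sqrt ?n * l2norm (r (Suc i)) (l (Suc i))"
    using i(2) by (subst mult.commute, intro mult_left_mono) (simp_all add: l2norm_def sum_nonneg)
  finally have "sqrt ?n * 2^i \<le> l2norm (r (Suc i)) (l (Suc i))"
    by (simp add: mult_le_cancel_left_pos)
  then show ?thesis
    using i(1) by (intro bexI[of _ "Suc i"]) auto
qed

lemma online_run_weighted_hadamard_competitive_ratio: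
  assumes N: "2^k \<le> N" and run: "online_run N (weighted_hadamard k) r R l"
  shows "\<exists>t\<in>{1..N}. sqrt (1/2 * log 2 (gamma2 N N (weighted_hadamard k))) * gamma2 t N (weighted_hadamard k)
    \<le> Max ((\<lambda>s. l2norm (r s) (l s)) ` {1..t})"
proof -
  obtain t where t: "t \<in> {1..2^k}" "sqrt (2^k) * 2^(t - 1) \<le> l2norm (r t) (l t)"
    using online_run_weighted_hadamard_row_norm[OF N run] by blast
  have "sqrt (1/2 * log 2 (gamma2 N N (weighted_hadamard k))) * gamma2 t N (weighted_hadamard k)
      \<le> sqrt (1/2 * 2^k) * (2^t / sqrt 2)"
  proof (intro mult_mono)
    show "sqrt (1/2 * log 2 (gamma2 N N (weighted_hadamard k))) \<le> sqrt (1/2 * 2^k)"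
      using log_gamma2_weighted_hadamard(2)[OF N] by simp
    show "gamma2 t N (weighted_hadamard k) \<le> 2^t / sqrt 2"
      using gamma2_weighted_hadamard_le[of t k N] t(1) by (simp add: min_absorb1)
  qed (simp_all add: gamma2_nonneg)
  also have "sqrt (1/2 * 2^k) * (2^t / sqrt 2) = sqrt (2^k) * 2^(t - 1)"
    using t(1) by (simp add: real_sqrt_mult real_sqrt_divide power_diff)
  also have "\<dots> \<le> Max ((\<lambda>s. l2norm (r s) (l s)) ` {1..t})"
    using t by (intro order_trans[OF t(2)] Max_ge) auto
  finally show ?thesis
    using t(1) N by (intro bexI[of _ t]) auto
qed

lemma exists_weighted_hadamard_witness:
  assumes "0 < N"
  shows "\<exists>Q. inf_norm N (Q 0) = 1 \<and>
    (2 \<le> N \<longrightarrow> 1/4 * real N \<le> log 2 (gamma2 N N Q) \<and> log 2 (gamma2 N N Q) \<le> real N) \<and>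
    (\<forall>r R l. online_run N Q r R l \<longrightarrow>
      (\<exists>t\<in>{1..N}. sqrt (1/2 * log 2 (gamma2 N N Q)) * gamma2 t N Q
        \<le> Max ((\<lambda>s. l2norm (r s) (l s)) ` {1..t})))"
proof -
  obtain k where k: "2^k \<le> N" "N < 2^(k + 1)"
    using ex_power_ivl1[of 2 N] assms by auto
  let ?G = "gamma2 N N (weighted_hadamard k)"
  show ?thesis
  proof (intro exI[of _ "weighted_hadamard k"] conjI impI allI)
    show "inf_norm N (weighted_hadamard k 0) = 1"
      using assms by (rule inf_norm_weighted_hadamard_row_0)
    assume "2 \<le> N"
    then have "k \<noteq> 0"
      using k(2) by (intro notI) simp
    then have "2 \<le> (2::real)^k"
      by (simp add: self_le_power)
    have "real N < real (2 * 2^k)"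
      using k(2) by (simp only: of_nat_less_iff) simp
    with \<open>2 \<le> (2::real)^k\<close> show "1/4 * real N \<le> log 2 ?G"
      using log_gamma2_weighted_hadamard(1)[OF k(1)] by simp
    have "(2::real)^k \<le> real N"
      using k(1) by simp
    then show "log 2 ?G \<le> real N"
      using log_gamma2_weighted_hadamard(2)[OF k(1)] by linarith
  next
    fix r R l
    assume "online_run N (weighted_hadamard k) r R l"
    with k(1) show "\<exists>t\<in>{1..N}. sqrt (1/2 * log 2 ?G) * gamma2 t N (weighted_hadamard k)
        \<le> Max ((\<lambda>s. l2norm (r s) (l s)) ` {1..t})"
      by (rule online_run_weighted_hadamard_competitive_ratio)
  qed
qed

theorem theorem5p1:
  shows "\<exists>c1 c2 :: real. \<exists>N0 :: nat. c1 > 0 \<and> c2 > 0 \<and>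
    (\<forall>N::nat. N > 0 \<longrightarrow>
      (\<exists>Q :: nat \<Rightarrow> nat \<Rightarrow> real.
         inf_norm N (Q 0) = 1 \<and>
         (N \<ge> N0 \<longrightarrow> c1 * real N \<le> log 2 (gamma2 N N Q) \<and> log 2 (gamma2 N N Q) \<le> c2 * real N) \<and>
         (\<forall>r R l. online_run N Q r R l \<longrightarrow>
            (\<exists>t\<in>{1..N}.
               Max ((\<lambda>s. l2norm (r s) (l s)) ` {1..t})
                 \<ge> sqrt (1/2 * log 2 (gamma2 N N Q)) * gamma2 t N Q))))"
  using exists_weighted_hadamard_witness by (intro exI[of _ "1/4"] exI[of _ 1] exI[of _ 2]) simp

end
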